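(* Let $N\ge 1$, $\alpha>0$ and $u_0\in L^1(\mathbb{R}^N)\cap L^2(\mathbb{R}^N)$, and let $u$ be the solution of $$\frac{\partial u}{\partial t}+(-\Delta)^\alpha u=0 \text{ on } (0,\infty)\times\mathbb{R}^N,\qquad u(0,x)=u_0(x) \text{ on } \mathbb{R}^N,$$ i.e. $$u(t,x)=(2\pi)^{-N/2}\int_{\mathbb{R}^N}e^{-t|\omega|^{2\alpha}}\widehat{u}_0(\omega)e^{i\omega\cdot x}\,d\omega .$$ For $t>0$ define $$c_t:=\frac{(2\pi)^N}{M_\alpha}t^{N/2\alpha},\qquad M_\alpha:=\int_{\mathbb{R}^N}e^{-|s|^{2\alpha}}\,ds.$$ Then for every compact set $K\subseteq\mathbb{R}^N$, $$\lim_{t\to\infty}c_t\,u(t,x)=\int_{\mathbb{R}^N}u_0(y)\,dy$$ uniformly with respect to $x\in K$.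
   Context: The Fourier transform is $\widehat{u}_0(\omega)=(2\pi)^{-N/2}\int_{\mathbb{R}^N}u_0(x)e^{-i\omega\cdot x}\,dx$, and $(-\Delta)^\alpha$ is the operator with Fourier symbol $|\omega|^{2\alpha}$. *)

theory Defs
  imports "HOL-Analysis.Analysis"
begin

text \<open>Dimension N = DIM('a) for an arbitrary Euclidean space 'a (isometric to R^N).
  Fourier transform with the normalisation (2 pi)^(-N/2), integrals w.r.t. Lebesgue measure.\<close>

definition fourier_transform :: "('a::euclidean_space \<Rightarrow> complex) \<Rightarrow> 'a \<Rightarrow> complex" where
  "fourier_transform f \<omega> =
     complex_of_real ((2 * pi) powr (- real DIM('a) / 2)) *
     (\<integral>x. f x * cis (- (\<omega> \<bullet> x)) \<partial>lborel)"

definition frac_heat_sol :: "real \<Rightarrow> ('a::euclidean_space \<Rightarrow> real) \<Rightarrow> real \<Rightarrow> 'a \<Rightarrow> complex" where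
  "frac_heat_sol \<alpha> u0 t x =
     complex_of_real ((2 * pi) powr (- real DIM('a) / 2)) *
     (\<integral>\<omega>. complex_of_real (exp (- t * norm \<omega> powr (2 * \<alpha>)))
            * fourier_transform (\<lambda>y. complex_of_real (u0 y)) \<omega> * cis (\<omega> \<bullet> x) \<partial>lborel)"

definition M_alpha :: "'a::euclidean_space itself \<Rightarrow> real \<Rightarrow> real" where
  "M_alpha _ \<alpha> = (\<integral>s. exp (- (norm (s::'a) powr (2 * \<alpha>))) \<partial>lborel)"

end

theory Submission
  imports Defs "HOL-Probability.Characteristic_Functions" "HOL-Probability.Sinc_Integral"
begin

text \<open>Substituting \<omega> = \<lambda> s with \<lambda> = t powr (-1 / (2 \<alpha>)) turns t powr (N / (2 \<alpha>)) u(t, x) into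
  (2 \<pi>) powr (-N/2) times the integral of exp (- |s| powr (2 \<alpha>)) F(\<lambda> s) cis (\<lambda> s \<bullet> x), where F is the
  Fourier transform of u0. As u0 is integrable, F is bounded and continuous, and
  |cis \<theta> - 1| \<le> min 2 |\<theta>| controls the phase uniformly for x in a bounded set. Dominated convergence
  as \<lambda> \<rightarrow> 0 therefore gives the uniform limit (2 \<pi>) powr (-N/2) M_alpha F(0) = (2 \<pi>) powr (-N) M_alpha \<integral> u0.\<close>

lemma norm_cis_minus_one_le: "norm (cis \<theta> - 1) \<le> min 2 \<bar>\<theta>\<bar>"
  using iexp_approx1[of \<theta> 0] norm_triangle_ineq4[of "cis \<theta>" 1] by (simp add: cis_conv_exp)

lemma norm_mult_cis_diff_le:
  fixes a b :: complex
  assumes "norm b \<le> L"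
  shows "norm (a * cis \<theta> - b) \<le> norm (a - b) + L * min 2 \<bar>\<theta>\<bar>"
proof -
  have "a * cis \<theta> - b = (a - b) * cis \<theta> + b * (cis \<theta> - 1)"
    by (simp add: algebra_simps)
  then have "norm (a * cis \<theta> - b) \<le> norm (a - b) + norm b * norm (cis \<theta> - 1)"
    by (metis norm_triangle_ineq norm_mult norm_cis mult_1_right)
  also have "norm b * norm (cis \<theta> - 1) \<le> L * min 2 \<bar>\<theta>\<bar>"
    using assms norm_cis_minus_one_le[of \<theta>] by (intro mult_mono) (auto intro: order_trans[OF norm_ge_zero])
  finally show ?thesis by simp
qed

lemma nn_integral_lborel_affine:
  fixes f :: "'a::euclidean_space \<Rightarrow> ennreal"
  assumes [measurable]: "f \<in> borel_measurable borel" and c: "c \<noteq> 0"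
  shows "(\<integral>\<^sup>+x. f x \<partial>lborel) = ennreal (\<bar>c\<bar> ^ DIM('a)) * (\<integral>\<^sup>+x. f (t + c *\<^sub>R x) \<partial>lborel)"
  by (subst lborel_affine[OF c, of t])
     (simp add: nn_integral_density nn_integral_distr nn_integral_cmult)

lemma lborel_integrable_affine:
  fixes f :: "'a::euclidean_space \<Rightarrow> 'b::{banach, second_countable_topology}"
  assumes f: "integrable lborel f" and c: "c \<noteq> 0"
  shows "integrable lborel (\<lambda>x. f (t + c *\<^sub>R x))"
  using f f[THEN borel_measurable_integrable] unfolding integrable_iff_bounded
  by (subst (asm) nn_integral_lborel_affine[OF _ c, of _ t]) (auto simp: ennreal_mult_less_top c)

lemma lborel_integrable_affine_iff:
  fixes f :: "'a::euclidean_space \<Rightarrow> 'b::{banach, second_countable_topology}"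
  assumes c: "c \<noteq> 0"
  shows "integrable lborel (\<lambda>x. f (t + c *\<^sub>R x)) \<longleftrightarrow> integrable lborel f"
  using lborel_integrable_affine[of f c t]
    lborel_integrable_affine[of "\<lambda>x. f (t + c *\<^sub>R x)" "1 / c" "- (1 / c) *\<^sub>R t"] c
  by (auto simp: algebra_simps)

lemma lborel_integral_affine:
  fixes f :: "'a::euclidean_space \<Rightarrow> 'b::{banach, second_countable_topology}"
  assumes c: "c \<noteq> 0"
  shows "(\<integral>x. f x \<partial>lborel) = \<bar>c\<bar> ^ DIM('a) *\<^sub>R (\<integral>x. f (t + c *\<^sub>R x) \<partial>lborel)"
proof cases
  assume f[measurable]: "integrable lborel f"
  then show ?thesis
    using c f[THEN borel_measurable_integrable] lborel_integrable_affine[OF f c, of t]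
    by (subst lborel_affine[OF c, of t]) (simp add: integral_density integral_distr)
next
  assume "\<not> integrable lborel f"
  with c show ?thesis
    by (simp add: lborel_integrable_affine_iff not_integrable_integral_eq)
qed

lemma integrable_prod_Basis:
  fixes f :: "real \<Rightarrow> real"
  assumes f: "integrable lborel f" and f_nonneg: "\<And>y. 0 \<le> f y"
  shows "integrable lborel (\<lambda>x::'a::euclidean_space. \<Prod>b\<in>Basis. f (x \<bullet> b))"
proof (rule integrableI_nonneg)
  have [measurable]: "f \<in> borel_measurable borel"
    using f by auto
  show "(\<lambda>x::'a. \<Prod>b\<in>Basis. f (x \<bullet> b)) \<in> borel_measurable lborel"
    by measurable
  show "AE x in lborel. 0 \<le> (\<Prod>b\<in>(Basis::'a set). f (x \<bullet> b))"
    by (simp add: f_nonneg prod_nonneg)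
  have "(\<integral>\<^sup>+x. ennreal (\<Prod>b\<in>(Basis::'a set). f (x \<bullet> b)) \<partial>lborel)
      = (\<integral>\<^sup>+x. (\<Prod>b\<in>(Basis::'a set). ennreal (f (x \<bullet> b))) \<partial>lborel)"
    by (simp add: prod_ennreal f_nonneg)
  also have "\<dots> = (\<integral>\<^sup>+y. ennreal (f y) \<partial>lborel) ^ DIM('a)"
    using nn_integral_lborel_prod[of "\<lambda>_ y. ennreal (f y)"] by simp
  also have "\<dots> < \<infinity>"
    using f f_nonneg by (simp add: integrable_iff_bounded power_less_top_ennreal)
  finally show "(\<integral>\<^sup>+x. ennreal (\<Prod>b\<in>(Basis::'a set). f (x \<bullet> b)) \<partial>lborel) < \<infinity>" .
qed

lemma powr_le_exp:
  fixes y q :: real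
  assumes "0 \<le> y" "0 < q"
  shows "y powr q \<le> q powr q * exp y"
proof -
  have "y / q \<le> exp (y / q)"
    using exp_ge_add_one_self[of "y / q"] by linarith
  then have "(y / q) powr q \<le> exp (y / q) powr q"
    using assms by (intro powr_mono2) auto
  also have "\<dots> = exp y"
    using assms by (simp add: powr_def)
  finally show ?thesis
    using assms by (simp add: powr_divide field_simps)
qed

lemma one_plus_square_power_le_exp_powr:
  fixes r p :: real and N :: nat
  assumes r: "0 \<le> r" and p: "0 < p" and N: "0 < N"
  defines "q \<equiv> 2 * real N / p"
  shows "(1 + r\<^sup>2) ^ N \<le> 2 ^ N * (1 + q powr q) * exp (r powr p)"
proof -
  have q: "0 < q"
    using p N by (simp add: q_def)
  have "r ^ (2 * N) = (r powr p) powr q"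
    using r p N by (cases "r = 0") (simp_all add: q_def powr_powr powr_realpow[symmetric])
  also have "\<dots> \<le> q powr q * exp (r powr p)"
    using q by (intro powr_le_exp) auto
  finally have high: "r ^ (2 * N) \<le> q powr q * exp (r powr p)" .
  have "(1 + r\<^sup>2) ^ N \<le> (2 * max 1 (r\<^sup>2)) ^ N"
    by (intro power_mono) auto
  also have "\<dots> \<le> 2 ^ N * (1 + r ^ (2 * N))"
    by (cases "1 \<le> r\<^sup>2") (auto simp: power_mult_distrib max_def power_mult intro: one_le_power)
  also have "\<dots> \<le> 2 ^ N * (exp (r powr p) + q powr q * exp (r powr p))"
    using high by (intro mult_left_mono add_mono) auto
  finally show ?thesis
    by (simp add: algebra_simps)
qed

lemma exp_neg_norm_powr_le_prod:
  fixes s :: "'a::euclidean_space" and p :: real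
  assumes p: "0 < p"
  defines "q \<equiv> 2 * real DIM('a) / p"
  shows "exp (- (norm s powr p)) \<le> 2 ^ DIM('a) * (1 + q powr q) * (\<Prod>b\<in>Basis. inverse (1 + (s \<bullet> b)\<^sup>2))"
proof -
  define C where "C = 2 ^ DIM('a) * (1 + q powr q)"
  have "(\<Prod>b\<in>(Basis::'a set). 1 + (s \<bullet> b)\<^sup>2) \<le> (\<Prod>b\<in>(Basis::'a set). 1 + (norm s)\<^sup>2)"
    using Basis_le_norm[of _ s] by (intro prod_mono) (auto simp: abs_le_square_iff[symmetric])
  also have "\<dots> \<le> C * exp (norm s powr p)"
    using one_plus_square_power_le_exp_powr[OF norm_ge_zero p DIM_positive, of s]
    by (simp add: C_def q_def)
  finally have P: "(\<Prod>b\<in>(Basis::'a set). 1 + (s \<bullet> b)\<^sup>2) \<le> C * exp (norm s powr p)" .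
  have C: "0 < C"
    by (simp add: C_def add_pos_nonneg)
  have "exp (- (norm s powr p)) = C * inverse (C * exp (norm s powr p))"
    using C by (simp add: exp_minus)
  also have "\<dots> \<le> C * inverse (\<Prod>b\<in>(Basis::'a set). 1 + (s \<bullet> b)\<^sup>2)"
    using P C by (intro mult_left_mono le_imp_inverse_le) (auto intro!: prod_pos add_pos_nonneg)
  finally show ?thesis
    by (simp add: C_def prod_inversef[symmetric])
qed

lemma integrable_exp_neg_norm_powr:
  assumes "0 < p"
  shows "integrable lborel (\<lambda>s::'a::euclidean_space. exp (- (norm s powr p)))"
proof (rule Bochner_Integration.integrable_bound)
  have "integrable lborel (\<lambda>s::'a. \<Prod>b\<in>Basis. inverse (1 + (s \<bullet> b)\<^sup>2))"
    using integrable_inverse_1_plus_square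
    by (intro integrable_prod_Basis) (auto simp: einterval_eq_UNIV set_integrable_def)
  then show "integrable lborel (\<lambda>s::'a. 2 ^ DIM('a) * (1 + (2 * real DIM('a) / p) powr (2 * real DIM('a) / p))
      * (\<Prod>b\<in>Basis. inverse (1 + (s \<bullet> b)\<^sup>2)))"
    by (rule integrable_mult_right)
  show "AE s in lborel. norm (exp (- (norm (s::'a) powr p))) \<le> norm (2 ^ DIM('a) *
      (1 + (2 * real DIM('a) / p) powr (2 * real DIM('a) / p)) * (\<Prod>b\<in>Basis. inverse (1 + (s \<bullet> b)\<^sup>2)))"
    using exp_neg_norm_powr_le_prod[OF assms]
    by (auto intro!: AE_I2 order_trans[OF _ abs_ge_self])
qed measurable

lemma integral_lborel_pos:
  fixes f :: "'a::euclidean_space \<Rightarrow> real"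
  assumes f: "integrable lborel f" and pos: "\<And>x. 0 < f x"
  shows "0 < (\<integral>x. f x \<partial>lborel)"
proof -
  have "(\<integral>x. f x \<partial>lborel) \<noteq> 0"
  proof
    assume "(\<integral>x. f x \<partial>lborel) = 0"
    then have "AE x in lborel. f x = 0"
      using integral_nonneg_eq_0_iff_AE[OF f] pos by (simp add: less_imp_le)
    then have "AE x in (lborel :: 'a measure). False"
      using pos by (simp add: less_le)
    then show False
      by (simp add: AE_iff_measurable[of UNIV])
  qed
  moreover have "0 \<le> (\<integral>x. f x \<partial>lborel)"
    using pos by (simp add: less_imp_le)
  ultimately show ?thesis
    by simp
qed

lemma borel_measurable_cis [measurable]:
  assumes [measurable]: "f \<in> borel_measurable M"
  shows "(\<lambda>x. cis (f x)) \<in> borel_measurable M"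
  unfolding cis_conv_exp by measurable

lemma norm_fourier_transform_le:
  fixes f :: "'a::euclidean_space \<Rightarrow> complex"
  shows "norm (fourier_transform f \<omega>) \<le> (2 * pi) powr (- real DIM('a) / 2) * (\<integral>y. norm (f y) \<partial>lborel)"
proof -
  have "norm (\<integral>y. f y * cis (- (\<omega> \<bullet> y)) \<partial>lborel) \<le> (\<integral>y. norm (f y * cis (- (\<omega> \<bullet> y))) \<partial>lborel)"
    by (rule integral_norm_bound)
  then show ?thesis
    unfolding fourier_transform_def by (simp add: norm_mult mult_left_mono)
qed

lemma fourier_transform_0:
  fixes f :: "'a::euclidean_space \<Rightarrow> complex"
  shows "fourier_transform f 0 = (2 * pi) powr (- real DIM('a) / 2) * (\<integral>y. f y \<partial>lborel)"
  by (simp add: fourier_transform_def)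

lemma isCont_fourier_transform:
  fixes f :: "'a::euclidean_space \<Rightarrow> complex"
  assumes f: "integrable lborel f"
  shows "isCont (fourier_transform f) \<omega>"
proof (rule continuous_at_sequentiallyI)
  fix w :: "nat \<Rightarrow> 'a"
  assume w: "w \<longlonglongrightarrow> \<omega>"
  have [measurable]: "f \<in> borel_measurable borel"
    using f by auto
  have "(\<lambda>n. \<integral>y. f y * cis (- (w n \<bullet> y)) \<partial>lborel) \<longlonglongrightarrow> (\<integral>y. f y * cis (- (\<omega> \<bullet> y)) \<partial>lborel)"
  proof (rule integral_dominated_convergence[where w="\<lambda>y. norm (f y)"])
    show "(\<lambda>y. f y * cis (- (\<omega> \<bullet> y))) \<in> borel_measurable lborel"
      "\<And>n. (\<lambda>y. f y * cis (- (w n \<bullet> y))) \<in> borel_measurable lborel"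
      by measurable
    show "AE y in lborel. (\<lambda>n. f y * cis (- (w n \<bullet> y))) \<longlonglongrightarrow> f y * cis (- (\<omega> \<bullet> y))"
      by (intro AE_I2 tendsto_intros w continuous_on_tendsto_compose[OF continuous_on_cis])
  qed (use f in \<open>auto simp: norm_mult\<close>)
  then show "(\<lambda>n. fourier_transform f (w n)) \<longlonglongrightarrow> fourier_transform f \<omega>"
    unfolding fourier_transform_def by (intro tendsto_mult tendsto_const)
qed

lemma frac_heat_sol_rescaled:
  fixes u0 :: "'a::euclidean_space \<Rightarrow> real"
  assumes \<alpha>: "0 < \<alpha>" and t: "0 < t"
  defines "r \<equiv> t powr (- 1 / (2 * \<alpha>))"
  shows "complex_of_real (t powr (real DIM('a) / (2 * \<alpha>))) * frac_heat_sol \<alpha> u0 t x =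
    complex_of_real ((2 * pi) powr (- real DIM('a) / 2)) *
    (\<integral>s. complex_of_real (exp (- (norm s powr (2 * \<alpha>)))) *
       fourier_transform (\<lambda>y. complex_of_real (u0 y)) (r *\<^sub>R s) * cis ((r *\<^sub>R s) \<bullet> x) \<partial>lborel)"
proof -
  let ?F = "fourier_transform (\<lambda>y. complex_of_real (u0 y))"
  have r: "0 < r"
    using t by (simp add: r_def)
  have "r powr (2 * \<alpha>) = inverse t"
    unfolding r_def powr_powr using t \<alpha> by (simp add: powr_minus)
  then have exp_eq: "exp (- (t * (r * norm s) powr (2 * \<alpha>))) = exp (- (norm s powr (2 * \<alpha>)))" for s
    using r t by (simp add: powr_mult)
  have rN: "t powr (real DIM('a) / (2 * \<alpha>)) * r ^ DIM('a) = 1"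
    using t by (simp add: r_def powr_realpow[symmetric] powr_powr powr_add[symmetric])
  define J where "J = (\<integral>s. complex_of_real (exp (- (norm s powr (2 * \<alpha>)))) *
      ?F (r *\<^sub>R s) * cis ((r *\<^sub>R s) \<bullet> x) \<partial>lborel)"
  have "(\<integral>\<omega>. complex_of_real (exp (- t * norm \<omega> powr (2 * \<alpha>))) * ?F \<omega> * cis (\<omega> \<bullet> x) \<partial>lborel)
      = r ^ DIM('a) *\<^sub>R J"
    using lborel_integral_affine[of r "\<lambda>\<omega>. complex_of_real (exp (- t * norm \<omega> powr (2 * \<alpha>))) * ?F \<omega> * cis (\<omega> \<bullet> x)" 0] r
    by (simp add: exp_eq J_def)
  then have "complex_of_real (t powr (real DIM('a) / (2 * \<alpha>))) * frac_heat_sol \<alpha> u0 t x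
      = complex_of_real ((2 * pi) powr (- real DIM('a) / 2)) *
        (complex_of_real (t powr (real DIM('a) / (2 * \<alpha>)) * r ^ DIM('a)) * J)"
    unfolding frac_heat_sol_def by (simp add: scaleR_conv_of_real mult_ac)
  then show ?thesis
    unfolding rN J_def by simp
qed

lemma norm_dilation_error_le:
  fixes F :: "'a::real_normed_vector \<Rightarrow> complex"
  assumes "0 \<le> e" "\<And>\<omega>. norm (F \<omega>) \<le> L" "0 \<le> R"
  shows "norm (e * (norm (F (c *\<^sub>R s) - F 0) + L * min 2 (\<bar>c\<bar> * norm s * R))) \<le> e * (4 * L)"
proof -
  have L: "0 \<le> L"
    using assms(2)[of 0] norm_ge_zero[of "F 0"] by linarith
  have "norm (F (c *\<^sub>R s) - F 0) \<le> 2 * L"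
    using norm_triangle_ineq4[of "F (c *\<^sub>R s)" "F 0"] assms(2)[of "c *\<^sub>R s"] assms(2)[of 0] by simp
  moreover have "0 \<le> L * min 2 (\<bar>c\<bar> * norm s * R)"
    using L assms(3) by simp
  moreover have "L * min 2 (\<bar>c\<bar> * norm s * R) \<le> L * 2"
    using L by (intro mult_left_mono) auto
  ultimately show ?thesis
    using assms(1) by (auto simp: abs_mult intro!: mult_left_mono)
qed

lemma integrable_dilation_error:
  fixes e :: "'a::euclidean_space \<Rightarrow> real" and F :: "'a \<Rightarrow> complex"
  assumes e: "integrable lborel e" "\<And>s. 0 \<le> e s"
    and F: "F \<in> borel_measurable borel" "\<And>\<omega>. norm (F \<omega>) \<le> L"
    and R: "0 \<le> R"
  shows "integrable lborel (\<lambda>s. e s * (norm (F (c *\<^sub>R s) - F 0) + L * min 2 (\<bar>c\<bar> * norm s * R)))"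
proof (rule Bochner_Integration.integrable_bound[OF integrable_mult_left[OF e(1), of "4 * L"]])
  have [measurable]: "e \<in> borel_measurable borel" "F \<in> borel_measurable borel"
    using e F by auto
  show "(\<lambda>s. e s * (norm (F (c *\<^sub>R s) - F 0) + L * min 2 (\<bar>c\<bar> * norm s * R))) \<in> borel_measurable lborel"
    by measurable
  show "AE s in lborel. norm (e s * (norm (F (c *\<^sub>R s) - F 0) + L * min 2 (\<bar>c\<bar> * norm s * R)))
      \<le> norm (e s * (4 * L))"
    using norm_dilation_error_le[where F=F, OF e(2) F(2) R] by (auto intro!: AE_I2 order_trans[OF _ abs_ge_self])
qed

lemma dilation_error_tendsto_0:
  fixes e :: "'a::euclidean_space \<Rightarrow> real" and F :: "'a \<Rightarrow> complex" and r :: "real \<Rightarrow> real"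
  assumes e: "integrable lborel e" "\<And>s. 0 \<le> e s"
    and F: "F \<in> borel_measurable borel" "isCont F 0" "\<And>\<omega>. norm (F \<omega>) \<le> L"
    and R: "0 \<le> R" and r: "(r \<longlongrightarrow> 0) at_top"
  shows "((\<lambda>t. \<integral>s. e s * (norm (F (r t *\<^sub>R s) - F 0) + L * min 2 (\<bar>r t\<bar> * norm s * R)) \<partial>lborel)
           \<longlongrightarrow> 0) at_top"
proof -
  have [measurable]: "e \<in> borel_measurable borel" "F \<in> borel_measurable borel"
    using e F by auto
  have "((\<lambda>t. \<integral>s. e s * (norm (F (r t *\<^sub>R s) - F 0) + L * min 2 (\<bar>r t\<bar> * norm s * R)) \<partial>lborel)
           \<longlongrightarrow> (\<integral>s. 0 \<partial>(lborel :: 'a measure))) at_top"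
  proof (rule integral_dominated_convergence_at_top[where w="\<lambda>s. e s * (4 * L)"])
    show "AE s in lborel.
        ((\<lambda>t. e s * (norm (F (r t *\<^sub>R s) - F 0) + L * min 2 (\<bar>r t\<bar> * norm s * R))) \<longlongrightarrow> 0) at_top"
    proof (rule AE_I2)
      fix s :: 'a
      have "((\<lambda>t. F (r t *\<^sub>R s)) \<longlongrightarrow> F 0) at_top"
        using tendsto_scaleR[OF r tendsto_const, of s] by (intro isCont_tendsto_compose[OF F(2)]) simp
      then have "((\<lambda>t. e s * (norm (F (r t *\<^sub>R s) - F 0) + L * min 2 (\<bar>r t\<bar> * norm s * R)))
          \<longlongrightarrow> e s * (norm (F 0 - F 0) + L * min 2 (\<bar>0\<bar> * norm s * R))) at_top"
        by (intro tendsto_intros r)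
      then show "((\<lambda>t. e s * (norm (F (r t *\<^sub>R s) - F 0) + L * min 2 (\<bar>r t\<bar> * norm s * R))) \<longlongrightarrow> 0) at_top"
        by simp
    qed
  qed (use e norm_dilation_error_le[where F=F, OF e(2) F(3) R] in auto)
  then show ?thesis
    by simp
qed

lemma norm_dilated_integral_diff_le:
  fixes e :: "'a::euclidean_space \<Rightarrow> real" and F :: "'a \<Rightarrow> complex"
  assumes e: "integrable lborel e" "\<And>s. 0 \<le> e s"
    and F: "F \<in> borel_measurable borel" "\<And>\<omega>. norm (F \<omega>) \<le> L"
    and x: "norm x \<le> R"
  shows "norm ((\<integral>s. complex_of_real (e s) * F (c *\<^sub>R s) * cis ((c *\<^sub>R s) \<bullet> x) \<partial>lborel)
            - complex_of_real (\<integral>s. e s \<partial>lborel) * F 0)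
         \<le> (\<integral>s. e s * (norm (F (c *\<^sub>R s) - F 0) + L * min 2 (\<bar>c\<bar> * norm s * R)) \<partial>lborel)"
proof -
  have [measurable]: "e \<in> borel_measurable borel" "F \<in> borel_measurable borel"
    using e F by auto
  have L: "0 \<le> L"
    using F(2)[of 0] norm_ge_zero[of "F 0"] by linarith
  have weighted_integrable: "integrable lborel (\<lambda>s. complex_of_real (e s) * h s)"
    if "h \<in> borel_measurable lborel" "\<And>s. norm (h s) \<le> C" for h :: "'a \<Rightarrow> complex" and C
    using that e by (intro Bochner_Integration.integrable_bound[OF integrable_mult_left[OF e(1), of C]])
      (auto simp: norm_mult intro!: AE_I2 mult_left_mono order_trans[OF _ abs_ge_self])
  let ?h = "\<lambda>s. F (c *\<^sub>R s) * cis ((c *\<^sub>R s) \<bullet> x)"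
  have h_int: "integrable lborel (\<lambda>s. complex_of_real (e s) * ?h s)"
    using F(2) by (intro weighted_integrable) (auto simp: norm_mult)
  have F0_int: "integrable lborel (\<lambda>s. complex_of_real (e s) * F 0)"
    using F(2) by (intro weighted_integrable) auto
  have "(\<integral>s. complex_of_real (e s) * ?h s \<partial>lborel) - complex_of_real (\<integral>s. e s \<partial>lborel) * F 0
      = (\<integral>s. complex_of_real (e s) * ?h s - complex_of_real (e s) * F 0 \<partial>lborel)"
    by (subst Bochner_Integration.integral_diff[OF h_int F0_int]) (simp add: integral_mult_left_zero)
  also have "norm \<dots> \<le> (\<integral>s. e s * (norm (F (c *\<^sub>R s) - F 0) + L * min 2 (\<bar>c\<bar> * norm s * R)) \<partial>lborel)"
  proof (rule Bochner_Integration.integral_norm_bound_integral)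
    show "integrable lborel (\<lambda>s. complex_of_real (e s) * ?h s - complex_of_real (e s) * F 0)"
      by (intro Bochner_Integration.integrable_diff h_int F0_int)
    show "integrable lborel (\<lambda>s. e s * (norm (F (c *\<^sub>R s) - F 0) + L * min 2 (\<bar>c\<bar> * norm s * R)))"
      using integrable_dilation_error[OF e F order_trans[OF norm_ge_zero x]] .
    fix s :: 'a
    have "\<bar>(c *\<^sub>R s) \<bullet> x\<bar> \<le> norm (c *\<^sub>R s) * norm x"
      by (rule Cauchy_Schwarz_ineq2)
    also have "\<dots> \<le> norm (c *\<^sub>R s) * R"
      using x by (intro mult_left_mono) auto
    finally have phase: "\<bar>(c *\<^sub>R s) \<bullet> x\<bar> \<le> \<bar>c\<bar> * norm s * R"
      by simp
    have "norm (complex_of_real (e s) * ?h s - complex_of_real (e s) * F 0) = e s * norm (?h s - F 0)"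
      using e(2)[of s] by (simp add: norm_mult right_diff_distrib[symmetric])
    also have "\<dots> \<le> e s * (norm (F (c *\<^sub>R s) - F 0) + L * min 2 \<bar>(c *\<^sub>R s) \<bullet> x\<bar>)"
      using e(2)[of s] by (intro mult_left_mono norm_mult_cis_diff_le F(2))
    also have "\<dots> \<le> e s * (norm (F (c *\<^sub>R s) - F 0) + L * min 2 (\<bar>c\<bar> * norm s * R))"
      using phase L e(2)[of s] by (intro mult_left_mono add_left_mono) auto
    finally show "norm (complex_of_real (e s) * ?h s - complex_of_real (e s) * F 0)
        \<le> e s * (norm (F (c *\<^sub>R s) - F 0) + L * min 2 (\<bar>c\<bar> * norm s * R))" .
  qed
  finally show ?thesis
    by (simp add: mult.assoc)
qed

lemma uniform_limit_dilated_integral: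
  fixes e :: "'a::euclidean_space \<Rightarrow> real" and F :: "'a \<Rightarrow> complex" and r :: "real \<Rightarrow> real"
  assumes e: "integrable lborel e" "\<And>s. 0 \<le> e s"
    and F: "F \<in> borel_measurable borel" "isCont F 0" "\<And>\<omega>. norm (F \<omega>) \<le> L"
    and r: "(r \<longlongrightarrow> 0) at_top" and K: "bounded K"
  shows "uniform_limit K
           (\<lambda>t x. \<integral>s. complex_of_real (e s) * F (r t *\<^sub>R s) * cis ((r t *\<^sub>R s) \<bullet> x) \<partial>lborel)
           (\<lambda>x. complex_of_real (\<integral>s. e s \<partial>lborel) * F 0) at_top"
proof (rule uniform_limitI)
  fix \<epsilon> :: real
  assume "0 < \<epsilon>"
  obtain R where R: "0 \<le> R" "\<And>x. x \<in> K \<Longrightarrow> norm x \<le> R"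
    using K bounded_pos less_imp_le by metis
  have "\<forall>\<^sub>F t in at_top.
      (\<integral>s. e s * (norm (F (r t *\<^sub>R s) - F 0) + L * min 2 (\<bar>r t\<bar> * norm s * R)) \<partial>lborel) < \<epsilon>"
    using order_tendstoD(2)[OF dilation_error_tendsto_0[OF e F R(1) r] \<open>0 < \<epsilon>\<close>] .
  then show "\<forall>\<^sub>F t in at_top. \<forall>x\<in>K.
      dist (\<integral>s. complex_of_real (e s) * F (r t *\<^sub>R s) * cis ((r t *\<^sub>R s) \<bullet> x) \<partial>lborel)
           (complex_of_real (\<integral>s. e s \<partial>lborel) * F 0) < \<epsilon>"
    using norm_dilated_integral_diff_le[OF e F(1,3) R(2)]
    by (auto simp: dist_norm elim!: eventually_mono intro: le_less_trans)
qed

lemma M_alpha_pos: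
  assumes "0 < \<alpha>"
  shows "0 < M_alpha TYPE('a::euclidean_space) \<alpha>"
  unfolding M_alpha_def using assms
  by (intro integral_lborel_pos integrable_exp_neg_norm_powr) auto

lemma uniform_limit_frac_heat_sol_rescaled:
  fixes u0 :: "'a::euclidean_space \<Rightarrow> real"
  assumes \<alpha>: "0 < \<alpha>" and u0: "integrable lborel u0" and K: "bounded K"
  shows "uniform_limit K
           (\<lambda>t x. complex_of_real (t powr (real DIM('a) / (2 * \<alpha>))) * frac_heat_sol \<alpha> u0 t x)
           (\<lambda>x. complex_of_real ((2 * pi) powr (- real DIM('a)) * M_alpha TYPE('a) \<alpha> * (\<integral>y. u0 y \<partial>lborel)))
           at_top"
proof -
  define F where "F = fourier_transform (\<lambda>y. complex_of_real (u0 y))"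
  define e :: "'a \<Rightarrow> real" where "e = (\<lambda>s. exp (- (norm s powr (2 * \<alpha>))))"
  define r where "r t = t powr (- 1 / (2 * \<alpha>))" for t :: real
  define B where "B = (2 * pi) powr (- real DIM('a) / 2)"
  have u0_complex: "integrable lborel (\<lambda>y. complex_of_real (u0 y))"
    using u0 by simp
  have e: "integrable lborel e" "\<And>s. 0 \<le> e s"
    unfolding e_def using \<alpha> by (auto intro: integrable_exp_neg_norm_powr)
  have "uniform_limit K (\<lambda>t x. \<integral>s. complex_of_real (e s) * F (r t *\<^sub>R s) * cis ((r t *\<^sub>R s) \<bullet> x) \<partial>lborel)
      (\<lambda>x. complex_of_real (\<integral>s. e s \<partial>lborel) * F 0) at_top"
  proof (rule uniform_limit_dilated_integral[OF e _ _ _ _ K])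
    show "F \<in> borel_measurable borel"
      using isCont_fourier_transform[OF u0_complex]
      by (auto simp: F_def intro!: borel_measurable_continuous_onI continuous_at_imp_continuous_on)
    show "isCont F 0" "norm (F \<omega>) \<le> B * (\<integral>y. norm (u0 y) \<partial>lborel)" for \<omega>
      using isCont_fourier_transform[OF u0_complex] norm_fourier_transform_le[of "\<lambda>y. complex_of_real (u0 y)"]
      by (simp_all add: F_def B_def)
    show "(r \<longlongrightarrow> 0) at_top"
      unfolding r_def using \<alpha> by (intro tendsto_neg_powr filterlim_ident) auto
  qed
  then have lim: "uniform_limit K
      (\<lambda>t x. complex_of_real B *
        (\<integral>s. complex_of_real (e s) * F (r t *\<^sub>R s) * cis ((r t *\<^sub>R s) \<bullet> x) \<partial>lborel))
      (\<lambda>x. complex_of_real B * (complex_of_real (\<integral>s. e s \<partial>lborel) * F 0)) at_top"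
    by (rule bounded_linear.uniform_limit[OF bounded_linear_mult_right])
  have eq: "\<forall>\<^sub>F t in at_top. \<forall>x\<in>K.
      complex_of_real B *
        (\<integral>s. complex_of_real (e s) * F (r t *\<^sub>R s) * cis ((r t *\<^sub>R s) \<bullet> x) \<partial>lborel)
      = complex_of_real (t powr (real DIM('a) / (2 * \<alpha>))) * frac_heat_sol \<alpha> u0 t x"
    using eventually_gt_at_top[of 0]
    by eventually_elim (simp add: frac_heat_sol_rescaled[OF \<alpha>] F_def e_def r_def B_def)
  have limit_value: "complex_of_real B * (complex_of_real (\<integral>s. e s \<partial>lborel) * F 0)
      = complex_of_real ((2 * pi) powr (- real DIM('a)) * M_alpha TYPE('a) \<alpha> * (\<integral>y. u0 y \<partial>lborel))"
  proof -
    have BB: "B * B = (2 * pi) powr (- real DIM('a))"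
      unfolding B_def by (simp flip: powr_add)
    have "F 0 = complex_of_real (B * (\<integral>y. u0 y \<partial>lborel))"
      unfolding F_def B_def fourier_transform_0 by simp
    then have "complex_of_real B * (complex_of_real (\<integral>s. e s \<partial>lborel) * F 0)
        = complex_of_real ((B * B) * (\<integral>s. e s \<partial>lborel) * (\<integral>y. u0 y \<partial>lborel))"
      by (simp only: of_real_mult mult_ac)
    then show ?thesis
      unfolding BB M_alpha_def e_def .
  qed
  from uniform_limit_cong[OF eq limit_value] lim show ?thesis
    by simp
qed

theorem theorem1p1:
  fixes u0 :: "'a::euclidean_space \<Rightarrow> real" and \<alpha> :: real and K :: "'a set"
  assumes "\<alpha> > 0"
    and "integrable lborel u0"
    and "integrable lborel (\<lambda>x. (u0 x)\<^sup>2)"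
    and "compact K"
  shows "uniform_limit K
           (\<lambda>t x. complex_of_real ((2 * pi) ^ DIM('a) / M_alpha TYPE('a) \<alpha>
                      * t powr (real DIM('a) / (2 * \<alpha>))) * frac_heat_sol \<alpha> u0 t x)
           (\<lambda>x. complex_of_real (\<integral>y. u0 y \<partial>lborel))
           at_top"
proof -
  define c where "c = (2 * pi) ^ DIM('a) / M_alpha TYPE('a) \<alpha>"
  have lim: "uniform_limit K
      (\<lambda>t x. complex_of_real c * (complex_of_real (t powr (real DIM('a) / (2 * \<alpha>))) * frac_heat_sol \<alpha> u0 t x))
      (\<lambda>x. complex_of_real c * complex_of_real ((2 * pi) powr (- real DIM('a)) * M_alpha TYPE('a) \<alpha> * (\<integral>y. u0 y \<partial>lborel)))
      at_top"
    using uniform_limit_frac_heat_sol_rescaled[OF assms(1,2) compact_imp_bounded[OF assms(4)]]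
    by (rule bounded_linear.uniform_limit[OF bounded_linear_mult_right])
  have eq: "\<forall>\<^sub>F t in at_top. \<forall>x\<in>K.
      complex_of_real c * (complex_of_real (t powr (real DIM('a) / (2 * \<alpha>))) * frac_heat_sol \<alpha> u0 t x)
    = complex_of_real ((2 * pi) ^ DIM('a) / M_alpha TYPE('a) \<alpha> * t powr (real DIM('a) / (2 * \<alpha>)))
      * frac_heat_sol \<alpha> u0 t x"
    unfolding c_def by (intro always_eventually allI ballI) (simp only: of_real_mult mult.assoc)
  have "c * ((2 * pi) powr (- real DIM('a)) * M_alpha TYPE('a) \<alpha> * (\<integral>y. u0 y \<partial>lborel))
      = (\<integral>y. u0 y \<partial>lborel)"
    using M_alpha_pos[OF assms(1), where 'a='a] by (simp add: c_def powr_minus powr_realpow field_simps)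
  then have limit_value: "complex_of_real c *
      complex_of_real ((2 * pi) powr (- real DIM('a)) * M_alpha TYPE('a) \<alpha> * (\<integral>y. u0 y \<partial>lborel))
    = complex_of_real (\<integral>y. u0 y \<partial>lborel)"
    by (simp only: of_real_mult[symmetric])
  from uniform_limit_cong[OF eq limit_value] lim show ?thesis
    by simp
qed

end
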